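(* Let $\xi(k)=(\xi_1(k),\dots,\xi_d(k))$, $k\geq 0$, be a stationary $d$-dimensional stochastic process on a probability space $(\Omega,\mathcal{F},P)$ such that $E|\xi(0)|<\infty$. Let $Q=(Q_1,\dots,Q_d)$ be the (in general random) almost sure limit $Q=\lim_{n\to\infty}n^{-1}\sum_{k=0}^n\xi(k)$, which exists by the Birkhoff ergodic theorem. For $\nu\geq1$ and $1\leq i_1,\dots,i_\nu\leq d$ define \[ \Sigma^{i_1,\dots,i_\nu}(n)=\sum_{0\leq k_1<\dots<k_\nu<n}\xi_{i_1}(k_1)\xi_{i_2}(k_2)\cdots\xi_{i_\nu}(k_\nu). \] Then with probability one, \[ \lim_{n\to\infty}n^{-\nu}\Sigma^{i_1,\dots,i_\nu}(n)=\frac 1{\nu !}\prod_{j=1}^\nu Q_{i_j} \] for all $1\leq i_1,\dots,i_\nu\leq d$.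
   Context: $|\cdot|$ denotes the Euclidean norm on $\mathbb{R}^d$. *)

theory Defs
  imports "HOL-Probability.Probability"
begin

text \<open>Iterated sum over 0 \<le> k_0 < k_1 < ... < k_(nu-1) < n of
  xi_(i_0)(k_0) * ... * xi_(i_(nu-1))(k_(nu-1)); index tuples are encoded as
  functions nat \<Rightarrow> nat that vanish from position nu on.\<close>

definition incr_tuples :: "nat \<Rightarrow> nat \<Rightarrow> (nat \<Rightarrow> nat) set" where
  "incr_tuples \<nu> n = {ks. (\<forall>j<\<nu>. ks j < n) \<and> (\<forall>j. Suc j < \<nu> \<longrightarrow> ks j < ks (Suc j))
                          \<and> (\<forall>j\<ge>\<nu>. ks j = 0)}"

definition iter_sum :: "(nat \<Rightarrow> 'a \<Rightarrow> real ^ 'd) \<Rightarrow> (nat \<Rightarrow> 'd) \<Rightarrow> nat \<Rightarrow> nat \<Rightarrow> 'a \<Rightarrow> real" where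
  "iter_sum \<xi> is \<nu> n \<omega> = (\<Sum>ks\<in>incr_tuples \<nu> n. \<Prod>j<\<nu>. \<xi> (ks j) \<omega> $ is j)"

end

theory Submission
  imports Defs
begin

(* The iterated sums satisfy Sigma(nu+1, n) = sum_{m<n} xi_{i_(nu+1)}(m) * Sigma(nu, m), so induction
   on nu reduces the theorem, path by path, to a weighted Cesaro lemma: if a(m) ~ c m^r, the Cesaro
   means of y tend to p and the Cesaro means of |y| stay bounded, then
   sum_{m<n} y(m) a(m) ~ c p n^(r+1) / (r+1), by summation by parts against m^r.

   The bound on the Cesaro means of |xi| is where stationarity enters: Garsia's proof of the maximal
   ergodic inequality gives l * P(sup_n (1/n) sum_{k<n} |xi(k)| > l) <= E|xi(0)|, which tends to 0 as
   l goes to infinity. The bound cannot be dropped: for xi(2m) = sqrt m = -xi(2m+1) the Cesaro means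
   tend to 0, but Sigma^{1,1}(n) / n^2 tends to -1/8. *)

section \<open>Weighted Cesaro means\<close>

lemma cesaro_mean_lessThan:
  fixes x :: "nat \<Rightarrow> 'a::real_normed_vector"
  assumes "(\<lambda>n. (1 / real n) *\<^sub>R (\<Sum>k\<le>n. x k)) \<longlonglongrightarrow> q"
  shows "(\<lambda>n. (1 / real n) *\<^sub>R (\<Sum>k<n. x k)) \<longlonglongrightarrow> q"
proof (rule LIMSEQ_imp_Suc)
  have "(\<lambda>n. (real n / real (Suc n)) *\<^sub>R ((1 / real n) *\<^sub>R (\<Sum>k\<le>n. x k))) \<longlonglongrightarrow> 1 *\<^sub>R q"
    using LIMSEQ_n_over_Suc_n assms by (rule tendsto_scaleR)
  moreover have "\<forall>\<^sub>F n in sequentially.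
      (real n / real (Suc n)) *\<^sub>R ((1 / real n) *\<^sub>R (\<Sum>k\<le>n. x k)) = (1 / real (Suc n)) *\<^sub>R (\<Sum>k<Suc n. x k)"
    using eventually_gt_at_top[of 0] by eventually_elim (simp add: lessThan_Suc_atMost)
  ultimately show "(\<lambda>n. (1 / real (Suc n)) *\<^sub>R (\<Sum>k<Suc n. x k)) \<longlonglongrightarrow> q"
    using Lim_transform_eventually by fastforce
qed

lemma sum_div_tendsto_0_if_dominated:
  fixes h g D :: "nat \<Rightarrow> real"
  assumes small: "\<And>\<epsilon>. \<epsilon> > 0 \<Longrightarrow> \<forall>\<^sub>F m in sequentially. \<bar>h m\<bar> \<le> \<epsilon> * g m"
    and g_nonneg: "\<And>m. 0 \<le> g m"
    and g_sum: "\<And>n. (\<Sum>m<n. g m) \<le> C * D n"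
    and D: "filterlim D at_top sequentially"
  shows "(\<lambda>n. (\<Sum>m<n. h m) / D n) \<longlonglongrightarrow> 0"
proof (rule tendstoI)
  fix r :: real assume "r > 0"
  define e where "e = r / (2 * (\<bar>C\<bar> + 1))"
  have "e > 0" and "e * C < r / 2"
    using \<open>r > 0\<close> by (auto simp: e_def field_simps abs_if)
  obtain N where N: "\<And>m. m \<ge> N \<Longrightarrow> \<bar>h m\<bar> \<le> e * g m"
    using small[OF \<open>e > 0\<close>] by (auto simp: eventually_sequentially)
  define K where "K = (\<Sum>m<N. \<bar>h m\<bar>)"
  have "((\<lambda>n. K / D n) \<longlongrightarrow> 0) sequentially"
    by (intro tendsto_divide_0[OF tendsto_const] filterlim_at_top_imp_at_infinity D)
  then have "\<forall>\<^sub>F n in sequentially. K / D n < r / 2"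
    using \<open>r > 0\<close> by (intro order_tendstoD) auto
  moreover have "\<forall>\<^sub>F n in sequentially. 0 < D n"
    using D by (simp add: filterlim_at_top_dense)
  ultimately show "\<forall>\<^sub>F n in sequentially. dist ((\<Sum>m<n. h m) / D n) 0 < r"
    using eventually_ge_at_top[of N]
  proof eventually_elim
    case (elim n)
    have "\<bar>\<Sum>m<n. h m\<bar> \<le> (\<Sum>m<n. \<bar>h m\<bar>)"
      by (rule sum_abs)
    also have "\<dots> = K + (\<Sum>m\<in>{N..<n}. \<bar>h m\<bar>)"
      using \<open>N \<le> n\<close> unfolding K_def atLeast0LessThan[symmetric]
      by (simp add: sum.atLeastLessThan_concat)
    also have "(\<Sum>m\<in>{N..<n}. \<bar>h m\<bar>) \<le> (\<Sum>m\<in>{N..<n}. e * g m)"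
      using N by (intro sum_mono) auto
    also have "\<dots> \<le> (\<Sum>m<n. e * g m)"
      using \<open>e > 0\<close> g_nonneg by (intro sum_mono2) auto
    also have "\<dots> \<le> e * (C * D n)"
      using g_sum[of n] \<open>e > 0\<close> by (simp add: sum_distrib_left[symmetric])
    finally have "\<bar>\<Sum>m<n. h m\<bar> / D n \<le> K / D n + e * C"
      using \<open>0 < D n\<close> by (simp add: field_simps)
    then have "\<bar>\<Sum>m<n. h m\<bar> / D n < r"
      using elim(1) \<open>e * C < r / 2\<close> by linarith
    then show ?case
      using \<open>0 < D n\<close> by (simp add: abs_divide)
  qed
qed

lemma power_Suc_diff_bounds:
  fixes m :: real
  assumes "0 \<le> m"
  shows "real (Suc r) * m ^ r \<le> (m + 1) ^ Suc r - m ^ Suc r"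
    and "(m + 1) ^ Suc r - m ^ Suc r \<le> real (Suc r) * (m + 1) ^ r"
proof -
  have diff_eq: "(m + 1) ^ Suc r - m ^ Suc r = (\<Sum>i<Suc r. m ^ (r - i) * (m + 1) ^ i)"
    using power_diff_sumr2[of "m + 1" "Suc r" m] by simp
  have lower: "m ^ r \<le> m ^ (r - i) * (m + 1) ^ i"
    and upper: "m ^ (r - i) * (m + 1) ^ i \<le> (m + 1) ^ r" if "i \<le> r" for i
  proof -
    have "m ^ r = m ^ (r - i) * m ^ i" and "(m + 1) ^ r = (m + 1) ^ (r - i) * (m + 1) ^ i"
      using that by (simp_all flip: power_add)
    then show "m ^ r \<le> m ^ (r - i) * (m + 1) ^ i" and "m ^ (r - i) * (m + 1) ^ i \<le> (m + 1) ^ r"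
      using assms by (auto intro!: mult_left_mono mult_right_mono power_mono)
  qed
  have "(\<Sum>i<Suc r. m ^ r) \<le> (\<Sum>i<Suc r. m ^ (r - i) * (m + 1) ^ i)"
    by (intro sum_mono lower) simp
  then show "real (Suc r) * m ^ r \<le> (m + 1) ^ Suc r - m ^ Suc r"
    unfolding diff_eq by simp
  have "(\<Sum>i<Suc r. m ^ (r - i) * (m + 1) ^ i) \<le> (\<Sum>i<Suc r. (m + 1) ^ r)"
    by (intro sum_mono upper) simp
  then show "(m + 1) ^ Suc r - m ^ Suc r \<le> real (Suc r) * (m + 1) ^ r"
    unfolding diff_eq by simp
qed

lemma sum_power_div_tendsto:
  "(\<lambda>n. (\<Sum>m<n. real m ^ r) / real n ^ Suc r) \<longlonglongrightarrow> 1 / real (Suc r)"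
proof -
  define P where "P n = (\<Sum>m<n. real m ^ r)" for n
  have telescope: "real n ^ Suc r = (\<Sum>m<n. (real m + 1) ^ Suc r - real m ^ Suc r)" for n
    using sum_lessThan_telescope[of "\<lambda>m. real m ^ Suc r" n] by (simp add: add.commute)
  have upper: "real (Suc r) * P n \<le> real n ^ Suc r" for n
    unfolding telescope[of n] P_def sum_distrib_left by (intro sum_mono power_Suc_diff_bounds(1)) simp
  have lower: "real n ^ Suc r \<le> real (Suc r) * (P n + real n ^ r)" for n
  proof -
    have "real n ^ Suc r \<le> (\<Sum>m<n. real (Suc r) * (real m + 1) ^ r)"
      unfolding telescope[of n] by (intro sum_mono power_Suc_diff_bounds(2)) simp
    also have "\<dots> = real (Suc r) * (P (Suc n) - 0 ^ r)"
      unfolding P_def sum.lessThan_Suc_shift by (simp add: sum_distrib_left add.commute)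
    also have "\<dots> \<le> real (Suc r) * (P n + real n ^ r)"
      by (simp add: P_def)
    finally show ?thesis .
  qed
  have "\<forall>\<^sub>F n in sequentially. 1 / real (Suc r) - 1 / real n \<le> P n / real n ^ Suc r"
    using eventually_gt_at_top[of 0]
  proof eventually_elim
    case (elim n)
    have "(1 / real (Suc r) - 1 / real n) * real n ^ Suc r = real n ^ Suc r / real (Suc r) - real n ^ r"
      using elim by (simp add: left_diff_distrib)
    also have "\<dots> \<le> P n"
      using lower[of n] by (simp add: divide_le_eq algebra_simps)
    finally show ?case
      using elim by (simp add: le_divide_eq)
  qed
  moreover have "\<forall>\<^sub>F n in sequentially. P n / real n ^ Suc r \<le> 1 / real (Suc r)"
    using eventually_gt_at_top[of 0]
  proof eventually_elim
    case (elim n)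
    then show ?case
      using upper[of n] by (simp add: divide_le_eq le_divide_eq mult.commute del: of_nat_Suc power_Suc)
  qed
  moreover have "(\<lambda>n. 1 / real (Suc r) - 1 / real n) \<longlonglongrightarrow> 1 / real (Suc r)"
    using tendsto_diff[OF tendsto_const lim_inverse_n'] by simp
  ultimately show ?thesis
    unfolding P_def by (rule tendsto_sandwich) simp
qed

lemma summation_by_parts:
  fixes z w :: "nat \<Rightarrow> 'a::comm_ring"
  shows "(\<Sum>m<n. z m * w m) = (\<Sum>m<n. z m) * w n - (\<Sum>m<n. (\<Sum>k<Suc m. z k) * (w (Suc m) - w m))"
  by (induction n) (simp_all add: algebra_simps)

lemma filterlim_real_power_at_top: "r > 0 \<Longrightarrow> filterlim (\<lambda>n. real n ^ r) at_top sequentially"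
  by (intro filterlim_pow_at_top filterlim_real_sequentially) auto

lemma sum_mult_power_div_tendsto_0:
  fixes z :: "nat \<Rightarrow> real"
  assumes mean: "(\<lambda>n. (\<Sum>m<n. z m) / real n) \<longlonglongrightarrow> 0"
  shows "(\<lambda>n. (\<Sum>m<n. z m * real m ^ r) / real n ^ Suc r) \<longlonglongrightarrow> 0"
proof -
  define Z where "Z n = (\<Sum>m<n. z m)" for n
  define w where "w m = real m ^ r" for m
  have w_mono: "w m \<le> w (Suc m)" for m
    unfolding w_def by (intro power_mono) auto
  have boundary_term: "(\<lambda>n. Z n * w n / real n ^ Suc r) \<longlonglongrightarrow> 0"
  proof -
    have "\<forall>\<^sub>F n in sequentially. (\<Sum>m<n. z m) / real n = Z n * w n / real n ^ Suc r"
      using eventually_gt_at_top[of 0] by eventually_elim (simp add: Z_def w_def)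
    with mean show ?thesis by (rule Lim_transform_eventually)
  qed
  have sum_term: "(\<lambda>n. (\<Sum>m<n. Z (Suc m) * (w (Suc m) - w m)) / real n ^ Suc r) \<longlonglongrightarrow> 0"
  proof (rule sum_div_tendsto_0_if_dominated[where g = "\<lambda>m. real (Suc m) * (w (Suc m) - w m)" and C = 1])
    fix \<epsilon> :: real assume "\<epsilon> > 0"
    have "\<forall>\<^sub>F n in sequentially. \<bar>Z n / real n\<bar> < \<epsilon>"
      using order_tendstoD(2)[OF tendsto_rabs_zero[OF mean] \<open>\<epsilon> > 0\<close>] by (simp add: Z_def)
    then have "\<forall>\<^sub>F m in sequentially. \<bar>Z (Suc m)\<bar> \<le> \<epsilon> * real (Suc m)"
      unfolding eventually_sequentially_Suc[symmetric, of "\<lambda>n. \<bar>Z n / real n\<bar> < \<epsilon>"]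
      by eventually_elim (simp add: abs_divide divide_less_eq less_imp_le del: of_nat_Suc)
    then show "\<forall>\<^sub>F m in sequentially. \<bar>Z (Suc m) * (w (Suc m) - w m)\<bar> \<le> \<epsilon> * (real (Suc m) * (w (Suc m) - w m))"
    proof eventually_elim
      case (elim m)
      then show ?case
        using mult_right_mono[OF elim, of "w (Suc m) - w m"] w_mono[of m]
        by (simp add: abs_mult mult.assoc del: of_nat_Suc)
    qed
  next
    fix n
    have "(\<Sum>m<n. real (Suc m) * (w (Suc m) - w m)) \<le> (\<Sum>m<n. real n * (w (Suc m) - w m))"
      using w_mono by (intro sum_mono mult_right_mono) auto
    also have "\<dots> = real n * (w n - w 0)"
      by (simp add: sum_distrib_left[symmetric] sum_lessThan_telescope)
    also have "\<dots> \<le> 1 * real n ^ Suc r"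
      by (simp add: w_def algebra_simps)
    finally show "(\<Sum>m<n. real (Suc m) * (w (Suc m) - w m)) \<le> 1 * real n ^ Suc r" .
  qed (use w_mono filterlim_real_power_at_top[of "Suc r"] in auto)
  have "(\<Sum>m<n. z m * real m ^ r) / real n ^ Suc r
        = Z n * w n / real n ^ Suc r - (\<Sum>m<n. Z (Suc m) * (w (Suc m) - w m)) / real n ^ Suc r" for n
    using summation_by_parts[of z w n] unfolding Z_def w_def by (simp add: diff_divide_distrib)
  then show ?thesis
    using tendsto_diff[OF boundary_term sum_term] by simp
qed

lemma sum_mult_power_div_tendsto:
  fixes y :: "nat \<Rightarrow> real"
  assumes Y: "(\<lambda>n. (\<Sum>m<n. y m) / real n) \<longlonglongrightarrow> p"
  shows "(\<lambda>n. (\<Sum>m<n. y m * real m ^ r) / real n ^ Suc r) \<longlonglongrightarrow> p / real (Suc r)"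
proof -
  have "\<forall>\<^sub>F n in sequentially. (\<Sum>m<n. y m) / real n - p = (\<Sum>m<n. y m - p) / real n"
    using eventually_gt_at_top[of 0] by eventually_elim (simp add: sum_subtractf field_simps)
  with tendsto_diff[OF Y tendsto_const[of p]]
  have centered: "(\<lambda>n. (\<Sum>m<n. y m - p) / real n) \<longlonglongrightarrow> 0"
    by (simp add: tendsto_cong)
  have "(\<Sum>m<n. y m * real m ^ r) / real n ^ Suc r
        = p * ((\<Sum>m<n. real m ^ r) / real n ^ Suc r) + (\<Sum>m<n. (y m - p) * real m ^ r) / real n ^ Suc r"
    for n by (simp add: left_diff_distrib sum_subtractf sum_distrib_left diff_divide_distrib)
  then show ?thesis
    using tendsto_add[OF tendsto_mult_left[OF sum_power_div_tendsto[of r], of p]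
                         sum_mult_power_div_tendsto_0[OF centered, of r]]
    by simp
qed

lemma sum_mult_div_tendsto:
  fixes y a :: "nat \<Rightarrow> real"
  assumes A: "(\<lambda>n. a n / real n ^ r) \<longlonglongrightarrow> c"
    and Y: "(\<lambda>n. (\<Sum>m<n. y m) / real n) \<longlonglongrightarrow> p"
    and Y_abs: "\<And>n. (\<Sum>m<n. \<bar>y m\<bar>) \<le> B * real n"
  shows "(\<lambda>n. (\<Sum>m<n. y m * a m) / real n ^ Suc r) \<longlonglongrightarrow> c * p / real (Suc r)"
proof -
  define e where "e m = a m - c * real m ^ r" for m
  have error_term: "(\<lambda>n. (\<Sum>m<n. y m * e m) / real n ^ Suc r) \<longlonglongrightarrow> 0"
  proof (rule sum_div_tendsto_0_if_dominated[where g = "\<lambda>m. \<bar>y m\<bar> * real m ^ r" and C = B])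
    fix \<epsilon> :: real assume "\<epsilon> > 0"
    have "\<forall>\<^sub>F m in sequentially. \<bar>a m / real m ^ r - c\<bar> < \<epsilon>"
      using tendstoD[OF A \<open>\<epsilon> > 0\<close>] by (simp add: dist_real_def)
    then show "\<forall>\<^sub>F m in sequentially. \<bar>y m * e m\<bar> \<le> \<epsilon> * (\<bar>y m\<bar> * real m ^ r)"
      using eventually_gt_at_top[of 0]
    proof eventually_elim
      case (elim m)
      have "e m = (a m / real m ^ r - c) * real m ^ r"
        using elim(2) by (simp add: e_def field_simps)
      then have "\<bar>e m\<bar> = \<bar>a m / real m ^ r - c\<bar> * real m ^ r"
        by (simp add: abs_mult)
      also have "\<dots> \<le> \<epsilon> * real m ^ r"
        using elim(1) by (intro mult_right_mono) auto
      finally have "\<bar>e m\<bar> \<le> \<epsilon> * real m ^ r" .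
      from mult_left_mono[OF this, of "\<bar>y m\<bar>"] show ?case
        by (simp add: abs_mult mult.left_commute)
    qed
  next
    fix n
    have "(\<Sum>m<n. \<bar>y m\<bar> * real m ^ r) \<le> (\<Sum>m<n. \<bar>y m\<bar> * real n ^ r)"
      by (intro sum_mono mult_left_mono power_mono) auto
    also have "\<dots> \<le> B * real n ^ Suc r"
      using mult_right_mono[OF Y_abs[of n], of "real n ^ r"] by (simp add: sum_distrib_right[symmetric] mult_ac)
    finally show "(\<Sum>m<n. \<bar>y m\<bar> * real m ^ r) \<le> B * real n ^ Suc r" .
  qed (use filterlim_real_power_at_top[of "Suc r"] in auto)
  have "(\<Sum>m<n. y m * a m) / real n ^ Suc r
        = c * ((\<Sum>m<n. y m * real m ^ r) / real n ^ Suc r) + (\<Sum>m<n. y m * e m) / real n ^ Suc r" for n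
  proof -
    have "(\<Sum>m<n. y m * a m) = c * (\<Sum>m<n. y m * real m ^ r) + (\<Sum>m<n. y m * e m)"
      by (simp add: e_def algebra_simps sum_subtractf sum_distrib_left)
    then show ?thesis
      by (simp add: add_divide_distrib)
  qed
  then show ?thesis
    using tendsto_add[OF tendsto_mult_left[OF sum_mult_power_div_tendsto[OF Y, of r], of c] error_term]
    by simp
qed

section \<open>Iterated sums over increasing index tuples\<close>

lemma finite_incr_tuples: "finite (incr_tuples \<nu> n)"
proof (rule finite_subset)
  show "incr_tuples \<nu> n \<subseteq> {ks. \<forall>j. (j \<in> {..<\<nu>} \<longrightarrow> ks j \<in> {..<n}) \<and> (j \<notin> {..<\<nu>} \<longrightarrow> ks j = 0)}"
    unfolding incr_tuples_def by auto
  show "finite \<dots>"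
    by (intro finite_set_of_finite_funs) simp_all
qed

lemma incr_tuples_0 [simp]: "incr_tuples 0 n = {\<lambda>_. 0}"
  unfolding incr_tuples_def by auto

lemma incr_tuples_strict_mono:
  assumes "ks \<in> incr_tuples \<nu> n" "i < j" "j < \<nu>"
  shows "ks i < ks j"
  using assms(2,3)
proof (induction j)
  case (Suc j)
  then have "ks j < ks (Suc j)"
    using assms(1) by (simp add: incr_tuples_def)
  with Suc show ?case
    by (cases "i = j") auto
qed simp

lemma bij_betw_incr_tuples_Suc:
  "bij_betw (\<lambda>ks. (ks \<nu>, ks(\<nu> := 0))) (incr_tuples (Suc \<nu>) n) (SIGMA m:{..<n}. incr_tuples \<nu> m)"
proof (rule bij_betw_byWitness[where f' = "\<lambda>(m, ks). ks(\<nu> := m)"])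
  show "(\<lambda>ks. (ks \<nu>, ks(\<nu> := 0))) ` incr_tuples (Suc \<nu>) n \<subseteq> (SIGMA m:{..<n}. incr_tuples \<nu> m)"
  proof (rule image_subsetI)
    fix ks assume ks: "ks \<in> incr_tuples (Suc \<nu>) n"
    then have "ks j < ks \<nu>" if "j < \<nu>" for j
      using incr_tuples_strict_mono that by blast
    with ks show "(ks \<nu>, ks(\<nu> := 0)) \<in> (SIGMA m:{..<n}. incr_tuples \<nu> m)"
      by (auto simp: incr_tuples_def)
  qed
qed (auto simp: incr_tuples_def less_Suc_eq)

lemma sum_incr_tuples_Suc:
  fixes F :: "nat \<Rightarrow> nat \<Rightarrow> 'a::comm_semiring_1"
  shows "(\<Sum>ks\<in>incr_tuples (Suc \<nu>) n. \<Prod>j<Suc \<nu>. F j (ks j))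
       = (\<Sum>m<n. F \<nu> m * (\<Sum>ks\<in>incr_tuples \<nu> m. \<Prod>j<\<nu>. F j (ks j)))"
proof -
  have "(\<Sum>ks\<in>incr_tuples (Suc \<nu>) n. \<Prod>j<Suc \<nu>. F j (ks j))
        = (\<Sum>(m, ks)\<in>(SIGMA m:{..<n}. incr_tuples \<nu> m). \<Prod>j<Suc \<nu>. F j ((ks(\<nu> := m)) j))"
    using sum.reindex_bij_betw[OF bij_betw_incr_tuples_Suc[of \<nu> n],
        of "\<lambda>(m, ks). \<Prod>j<Suc \<nu>. F j ((ks(\<nu> := m)) j)"] by simp
  also have "\<dots> = (\<Sum>m<n. \<Sum>ks\<in>incr_tuples \<nu> m. F \<nu> m * (\<Prod>j<\<nu>. F j (ks j)))"
    by (subst sum.Sigma[symmetric]) (auto simp: finite_incr_tuples mult.commute)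
  finally show ?thesis
    by (simp add: sum_distrib_left)
qed

lemma iterated_sum_div_tendsto:
  fixes F :: "nat \<Rightarrow> nat \<Rightarrow> real"
  assumes "\<And>j. j < \<nu> \<Longrightarrow> (\<lambda>n. (\<Sum>m<n. F j m) / real n) \<longlonglongrightarrow> p j"
    and "\<And>j n. j < \<nu> \<Longrightarrow> (\<Sum>m<n. \<bar>F j m\<bar>) \<le> B * real n"
  shows "(\<lambda>n. (\<Sum>ks\<in>incr_tuples \<nu> n. \<Prod>j<\<nu>. F j (ks j)) / real n ^ \<nu>)
           \<longlonglongrightarrow> (\<Prod>j<\<nu>. p j) / fact \<nu>"
  using assms
proof (induction \<nu>)
  case (Suc \<nu>)
  have "(\<lambda>n. (\<Sum>m<n. F \<nu> m * (\<Sum>ks\<in>incr_tuples \<nu> m. \<Prod>j<\<nu>. F j (ks j))) / real n ^ Suc \<nu>)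
          \<longlonglongrightarrow> (\<Prod>j<\<nu>. p j) / fact \<nu> * p \<nu> / real (Suc \<nu>)"
    using Suc by (intro sum_mult_div_tendsto) auto
  then show ?case
    unfolding sum_incr_tuples_Suc by (simp add: field_simps)
qed simp

section \<open>The maximal ergodic inequality\<close>

definition stationary :: "'a measure \<Rightarrow> (nat \<Rightarrow> 'a \<Rightarrow> 'b::topological_space) \<Rightarrow> bool" where
  "stationary M X \<longleftrightarrow> (\<forall>k. distr M (PiM UNIV (\<lambda>_. borel)) (\<lambda>\<omega> n. X (n + k) \<omega>)
                             = distr M (PiM UNIV (\<lambda>_. borel)) (\<lambda>\<omega> n. X n \<omega>))"

lemma measurable_shifted_process:
  assumes "\<And>k. X k \<in> borel_measurable M"
  shows "(\<lambda>\<omega> n. X (n + k) \<omega>) \<in> M \<rightarrow>\<^sub>M PiM UNIV (\<lambda>_. borel)"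
  by (rule measurable_PiM_single') (auto simp: assms)

lemma stationary_integral:
  fixes g :: "(nat \<Rightarrow> 'b::topological_space) \<Rightarrow> 'c::{banach, second_countable_topology}"
  assumes "stationary M X" and meas: "\<And>k. X k \<in> borel_measurable M"
    and g: "g \<in> borel_measurable (PiM UNIV (\<lambda>_. borel))"
  shows "integrable M (\<lambda>\<omega>. g (\<lambda>n. X (n + k) \<omega>)) \<longleftrightarrow> integrable M (\<lambda>\<omega>. g (\<lambda>n. X n \<omega>))"
    and "(\<integral>\<omega>. g (\<lambda>n. X (n + k) \<omega>) \<partial>M) = (\<integral>\<omega>. g (\<lambda>n. X n \<omega>) \<partial>M)"
proof -
  note shifted = measurable_shifted_process[of X M k, OF meas]
  note unshifted = measurable_shifted_process[of X M 0, OF meas, simplified]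
  have distr_eq: "distr M (PiM UNIV (\<lambda>_. borel)) (\<lambda>\<omega> n. X (n + k) \<omega>)
                  = distr M (PiM UNIV (\<lambda>_. borel)) (\<lambda>\<omega> n. X n \<omega>)"
    using assms(1) by (simp add: stationary_def)
  show "integrable M (\<lambda>\<omega>. g (\<lambda>n. X (n + k) \<omega>)) \<longleftrightarrow> integrable M (\<lambda>\<omega>. g (\<lambda>n. X n \<omega>))"
    using integrable_distr_eq[OF shifted g] integrable_distr_eq[OF unshifted g] distr_eq by simp
  show "(\<integral>\<omega>. g (\<lambda>n. X (n + k) \<omega>) \<partial>M) = (\<integral>\<omega>. g (\<lambda>n. X n \<omega>) \<partial>M)"
    using integral_distr[OF shifted g] integral_distr[OF unshifted g] distr_eq by simp
qed

lemma stationary_comp: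
  assumes "stationary M X" and meas: "\<And>k. X k \<in> borel_measurable M"
    and f: "f \<in> borel_measurable borel"
  shows "stationary M (\<lambda>k \<omega>. f (X k \<omega>))"
  unfolding stationary_def
proof
  fix k
  let ?P = "PiM UNIV (\<lambda>_. borel)"
  have f_pointwise: "(\<lambda>x n. f (x n)) \<in> ?P \<rightarrow>\<^sub>M ?P"
    by (rule measurable_PiM_single') (auto intro: measurable_compose[OF _ f])
  have "distr M ?P (\<lambda>\<omega> n. f (X (n + j) \<omega>)) = distr (distr M ?P (\<lambda>\<omega> n. X (n + j) \<omega>)) ?P (\<lambda>x n. f (x n))"
    for j using distr_distr[OF f_pointwise measurable_shifted_process[of X M j, OF meas]]
    by (simp add: comp_def)
  from this[of k] this[of 0] assms(1) show "distr M ?P (\<lambda>\<omega> n. f (X (n + k) \<omega>)) = distr M ?P (\<lambda>\<omega> n. f (X n \<omega>))"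
    by (simp add: stationary_def)
qed

definition max_partial_sum :: "nat \<Rightarrow> (nat \<Rightarrow> real) \<Rightarrow> real" where
  "max_partial_sum n x = Max ((\<lambda>k. \<Sum>j<k. x j) ` {..n})"

lemma max_partial_sum_ge: "k \<le> n \<Longrightarrow> (\<Sum>j<k. x j) \<le> max_partial_sum n x"
  unfolding max_partial_sum_def by (intro Max_ge) auto

lemma max_partial_sum_nonneg: "0 \<le> max_partial_sum n x"
  using max_partial_sum_ge[of 0 n x] by simp

lemma max_partial_sum_pos_iff: "0 < max_partial_sum n x \<longleftrightarrow> (\<exists>k\<le>n. 0 < (\<Sum>j<k. x j))"
  unfolding max_partial_sum_def by (subst Max_gr_iff) auto

lemma max_partial_sum_attained: "\<exists>k\<le>n. max_partial_sum n x = (\<Sum>j<k. x j)"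
proof -
  have "max_partial_sum n x \<in> (\<lambda>k. \<Sum>j<k. x j) ` {..n}"
    unfolding max_partial_sum_def by (rule Max_in) auto
  then show ?thesis by auto
qed

lemma abs_max_partial_sum_le: "\<bar>max_partial_sum n x\<bar> \<le> (\<Sum>j<n. \<bar>x j\<bar>)"
proof -
  obtain k where "k \<le> n" and max_eq: "max_partial_sum n x = (\<Sum>j<k. x j)"
    using max_partial_sum_attained by blast
  have "(\<Sum>j<k. x j) \<le> (\<Sum>j<k. \<bar>x j\<bar>)"
    by (intro sum_mono) simp
  also have "\<dots> \<le> (\<Sum>j<n. \<bar>x j\<bar>)"
    using \<open>k \<le> n\<close> by (intro sum_mono2) auto
  finally have "(\<Sum>j<k. x j) \<le> (\<Sum>j<n. \<bar>x j\<bar>)" .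
  then show ?thesis using max_eq max_partial_sum_nonneg[of n x] by simp
qed

lemma max_partial_sum_le_shift:
  "max_partial_sum n x \<le> (if 0 < max_partial_sum n x then x 0 else 0) + max_partial_sum n (\<lambda>j. x (Suc j))"
proof (cases "0 < max_partial_sum n x")
  case True
  obtain k where "k \<le> n" and max_eq: "max_partial_sum n x = (\<Sum>j<k. x j)"
    using max_partial_sum_attained by blast
  with True obtain k' where k': "k = Suc k'" by (cases k) auto
  have "(\<Sum>j<k'. x (Suc j)) \<le> max_partial_sum n (\<lambda>j. x (Suc j))"
    using \<open>k \<le> n\<close> k' by (intro max_partial_sum_ge) simp
  then show ?thesis using True unfolding max_eq k' sum.lessThan_Suc_shift by simp
qed (use max_partial_sum_nonneg[of n "\<lambda>j. x (Suc j)"] in simp)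

lemma borel_measurable_max_partial_sum[measurable]:
  "max_partial_sum n \<in> borel_measurable (PiM UNIV (\<lambda>_. borel))"
  unfolding max_partial_sum_def by measurable

theorem maximal_ergodic_inequality:
  fixes Y :: "nat \<Rightarrow> 'a \<Rightarrow> real"
  assumes "stationary M Y" and meas: "\<And>k. Y k \<in> borel_measurable M"
    and "integrable M (Y 0)"
  shows "0 \<le> (\<integral>\<omega>. Y 0 \<omega> * indicator {\<omega>\<in>space M. \<exists>k\<le>n. 0 < (\<Sum>j<k. Y j \<omega>)} \<omega> \<partial>M)"
proof -
  define S where "S k \<omega> = max_partial_sum n (\<lambda>j. Y (j + k) \<omega>)" for k \<omega>
  define A where "A = {\<omega>\<in>space M. \<exists>k\<le>n. 0 < (\<Sum>j<k. Y j \<omega>)}"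
  have A_eq: "A = {\<omega>\<in>space M. 0 < S 0 \<omega>}"
    by (simp add: A_def S_def max_partial_sum_pos_iff)
  have S_meas: "S k \<in> borel_measurable M" for k
    unfolding S_def
    by (rule measurable_compose[OF measurable_shifted_process[of Y M k, OF meas]]) simp
  then have A_sets: "A \<in> sets M"
    unfolding A_eq by measurable
  have Y_int: "integrable M (Y k)" for k
    using stationary_integral(1)[OF assms(1) meas, of "\<lambda>x. x 0" k] \<open>integrable M (Y 0)\<close> by simp
  have S_int: "integrable M (S k)" for k
  proof (rule Bochner_Integration.integrable_bound)
    show "integrable M (\<lambda>\<omega>. \<Sum>j<n. \<bar>Y (j + k) \<omega>\<bar>)"
      using Y_int by auto
    show "AE \<omega> in M. norm (S k \<omega>) \<le> norm (\<Sum>j<n. \<bar>Y (j + k) \<omega>\<bar>)"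
      using abs_max_partial_sum_le by (simp add: S_def sum_nonneg)
  qed (fact S_meas)
  have S_shift: "integral\<^sup>L M (S 1) = integral\<^sup>L M (S 0)"
    using stationary_integral(2)[OF assms(1) meas, of "max_partial_sum n" 1]
    by (simp add: S_def[abs_def])
  have YA_int: "integrable M (\<lambda>\<omega>. Y 0 \<omega> * indicator A \<omega>)"
    by (rule integrable_real_mult_indicator[OF A_sets Y_int])
  have "S 0 \<omega> \<le> Y 0 \<omega> * indicator A \<omega> + S 1 \<omega>" if "\<omega> \<in> space M" for \<omega>
    using max_partial_sum_le_shift[of n "\<lambda>j. Y j \<omega>"] that
    by (auto simp: A_eq S_def indicator_def split: if_splits)
  then have "integral\<^sup>L M (S 0) \<le> (\<integral>\<omega>. Y 0 \<omega> * indicator A \<omega> + S 1 \<omega> \<partial>M)"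
    using S_int YA_int by (intro integral_mono) auto
  also have "\<dots> = (\<integral>\<omega>. Y 0 \<omega> * indicator A \<omega> \<partial>M) + integral\<^sup>L M (S 0)"
    using S_int YA_int S_shift by simp
  finally show ?thesis by (simp add: A_def)
qed

lemma measure_partial_sums_exceed_le:
  fixes Y :: "nat \<Rightarrow> 'a \<Rightarrow> real"
  assumes "prob_space M" "stationary M Y" and meas: "\<And>k. Y k \<in> borel_measurable M"
    and "integrable M (Y 0)" and "l > 0"
  shows "measure M {\<omega>\<in>space M. \<exists>k. l * real k < (\<Sum>j<k. Y j \<omega>)} \<le> (\<integral>\<omega>. \<bar>Y 0 \<omega>\<bar> \<partial>M) / l"
proof -
  interpret prob_space M by fact
  define A where "A n = {\<omega>\<in>space M. \<exists>k\<le>n. 0 < (\<Sum>j<k. Y j \<omega> - l)}" for n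
  have A_sets: "A n \<in> sets M" for n
    unfolding A_def using meas by measurable
  have "stationary M (\<lambda>k \<omega>. Y k \<omega> - l)"
    using stationary_comp[OF assms(2) meas, of "\<lambda>y. y - l"] by simp
  have A_bound: "measure M (A n) \<le> (\<integral>\<omega>. \<bar>Y 0 \<omega>\<bar> \<partial>M) / l" for n
  proof -
    have YA_int: "integrable M (\<lambda>\<omega>. Y 0 \<omega> * indicator (A n) \<omega>)"
      using integrable_real_mult_indicator[OF A_sets assms(4)] .
    have "0 \<le> (\<integral>\<omega>. (Y 0 \<omega> - l) * indicator (A n) \<omega> \<partial>M)"
      unfolding A_def using assms(4) meas \<open>stationary M (\<lambda>k \<omega>. Y k \<omega> - l)\<close>
      by (intro maximal_ergodic_inequality) auto
    also have "\<dots> = (\<integral>\<omega>. Y 0 \<omega> * indicator (A n) \<omega> \<partial>M) - l * measure M (A n)"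
      using A_sets YA_int unfolding left_diff_distrib
      by (subst Bochner_Integration.integral_diff)
         (auto simp: mult.commute[of l] integrable_indicator_iff emeasure_eq_measure)
    also have "(\<integral>\<omega>. Y 0 \<omega> * indicator (A n) \<omega> \<partial>M) \<le> (\<integral>\<omega>. \<bar>Y 0 \<omega>\<bar> \<partial>M)"
      using YA_int assms(4) by (intro integral_mono) (auto simp: indicator_def)
    finally show ?thesis
      using \<open>l > 0\<close> by (simp add: field_simps)
  qed
  have "incseq A"
    by (auto simp: incseq_def A_def) (meson order_trans)
  then have "(\<lambda>n. measure M (A n)) \<longlonglongrightarrow> measure M (\<Union>n. A n)"
    using A_sets by (intro finite_Lim_measure_incseq) auto
  then have "measure M (\<Union>n. A n) \<le> (\<integral>\<omega>. \<bar>Y 0 \<omega>\<bar> \<partial>M) / l"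
    using A_bound by (intro LIMSEQ_le_const2) auto
  moreover have "(\<Union>n. A n) = {\<omega>\<in>space M. \<exists>k. l * real k < (\<Sum>j<k. Y j \<omega>)}"
    by (auto simp: A_def sum_subtractf mult.commute)
  ultimately show ?thesis by simp
qed

theorem AE_partial_sums_linearly_bounded:
  fixes Y :: "nat \<Rightarrow> 'a \<Rightarrow> real"
  assumes "prob_space M" "stationary M Y" and meas: "\<And>k. Y k \<in> borel_measurable M"
    and "integrable M (Y 0)"
  shows "AE \<omega> in M. \<exists>B. \<forall>n. (\<Sum>k<n. Y k \<omega>) \<le> B * real n"
proof -
  interpret prob_space M by fact
  define E where "E l = {\<omega>\<in>space M. \<exists>k. l * real k < (\<Sum>j<k. Y j \<omega>)}" for l
  define N where "N = (\<Inter>m. E (real (Suc m)))"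
  have N_sets: "N \<in> sets M"
    unfolding N_def E_def using meas by measurable
  have "measure M N \<le> (\<integral>\<omega>. \<bar>Y 0 \<omega>\<bar> \<partial>M) / real (Suc m)" for m
  proof -
    have "measure M N \<le> measure M (E (real (Suc m)))"
      unfolding N_def E_def using meas by (intro finite_measure_mono) (auto, measurable)
    also have "\<dots> \<le> (\<integral>\<omega>. \<bar>Y 0 \<omega>\<bar> \<partial>M) / real (Suc m)"
      unfolding E_def using assms by (intro measure_partial_sums_exceed_le) auto
    finally show ?thesis .
  qed
  moreover have "(\<lambda>m. (\<integral>\<omega>. \<bar>Y 0 \<omega>\<bar> \<partial>M) / real (Suc m)) \<longlonglongrightarrow> 0"
    by (rule LIMSEQ_Suc[OF lim_const_over_n])
  ultimately have "measure M N \<le> 0"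
    by (intro LIMSEQ_le_const) auto
  then have "N \<in> null_sets M"
    using N_sets by (simp add: emeasure_eq_measure null_sets_def measure_le_0_iff)
  moreover have "{\<omega>\<in>space M. \<not> (\<exists>B. \<forall>n. (\<Sum>k<n. Y k \<omega>) \<le> B * real n)} \<subseteq> N"
    by (auto simp: N_def E_def not_le)
  ultimately show ?thesis
    by (rule AE_I')
qed

theorem corollary2p2:
  fixes M :: "'a measure" and \<xi> :: "nat \<Rightarrow> 'a \<Rightarrow> real ^ 'd" and Q :: "'a \<Rightarrow> real ^ 'd"
  assumes "prob_space M"
    and meas: "\<And>k. \<xi> k \<in> borel_measurable M"
    and stationary: "\<And>k. distr M (PiM UNIV (\<lambda>_. borel)) (\<lambda>\<omega> n. \<xi> (n + k) \<omega>)
                         = distr M (PiM UNIV (\<lambda>_. borel)) (\<lambda>\<omega> n. \<xi> n \<omega>)"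
    and "integrable M (\<xi> 0)"
    and Q: "AE \<omega> in M. (\<lambda>n. (1 / real n) *\<^sub>R (\<Sum>k\<le>n. \<xi> k \<omega>)) \<longlonglongrightarrow> Q \<omega>"
  shows "AE \<omega> in M. \<forall>\<nu>\<ge>1. \<forall>is :: nat \<Rightarrow> 'd.
           (\<lambda>n. iter_sum \<xi> is \<nu> n \<omega> / real n ^ \<nu>)
             \<longlonglongrightarrow> (1 / fact \<nu>) * (\<Prod>j<\<nu>. Q \<omega> $ is j)"
proof -
  have "stationary M \<xi>"
    using stationary by (simp add: stationary_def)
  then have "AE \<omega> in M. \<exists>B. \<forall>n. (\<Sum>k<n. norm (\<xi> k \<omega>)) \<le> B * real n"
    using assms(1,4) meas stationary_comp[of M \<xi> norm]
    by (intro AE_partial_sums_linearly_bounded) auto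
  with Q show ?thesis
  proof eventually_elim
    case (elim \<omega>)
    then obtain B where B: "\<And>n. (\<Sum>k<n. norm (\<xi> k \<omega>)) \<le> B * real n"
      by blast
    have mean: "(\<lambda>n. (\<Sum>m<n. \<xi> m \<omega> $ i) / real n) \<longlonglongrightarrow> Q \<omega> $ i" for i
      using tendsto_vec_nth[OF cesaro_mean_lessThan[OF elim(1)], of i] by simp
    have abs_sum: "(\<Sum>m<n. \<bar>\<xi> m \<omega> $ i\<bar>) \<le> B * real n" for i n
      using B[of n] sum_mono[of "{..<n}" "\<lambda>m. \<bar>\<xi> m \<omega> $ i\<bar>"] component_le_norm_cart
      by (meson order_trans)
    show ?case
      unfolding iter_sum_def
      using iterated_sum_div_tendsto[of _ "\<lambda>j m. \<xi> m \<omega> $ _ j", OF mean abs_sum] by simp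
  qed
qed

end
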